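(* Let $m\ge1$ and $A=(a_0,\ldots,a_m)$ real with $a_0,a_m\ne0$. Suppose $\omega\in\mathbb{C}$ satisfies $P_A(\omega)=0$ and $|\omega|>1$. Then for every $\varepsilon>0$ there exists $n_0$ such that for every $n>n_0$ the polynomial $T_{n,A}$ has a (complex) root $\xi$ with $\left|\xi-\tfrac12(\omega+\omega^{-1})\right|<\varepsilon$.
   Context: $T_k$ denotes the Chebyshev polynomial of the first kind, $T_k(\cos\theta)=\cos k\theta$. For $A=(a_0,\ldots,a_m)$ real with $a_0,a_m\ne0$ and $n\ge m$, $T_{n,A}(x)=\sum_{i=0}^m a_iT_{n-i}(x)$ and $P_A(x)=\sum_{i=0}^m a_ix^{m-i}$. *)

theory Defs
  imports "HOL-Analysis.Analysis" "HOL-Computational_Algebra.Polynomial"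
begin

fun cheb_T :: "nat \<Rightarrow> real poly" where
  "cheb_T 0 = 1"
| "cheb_T (Suc 0) = [:0, 1:]"
| "cheb_T (Suc (Suc k)) = [:0, 2:] * cheb_T (Suc k) - cheb_T k"

definition T_nA :: "nat \<Rightarrow> nat \<Rightarrow> (nat \<Rightarrow> real) \<Rightarrow> real poly" where
  "T_nA n m a = (\<Sum>i\<le>m. smult (a i) (cheb_T (n - i)))"

definition P_A :: "nat \<Rightarrow> (nat \<Rightarrow> real) \<Rightarrow> real poly" where
  "P_A m a = (\<Sum>i\<le>m. monom (a i) (m - i))"

end

theory Submission
  imports Defs
begin

text \<open>Under the Joukowski substitution x = (z + 1/z)/2 one has T_k(x) = (z^k + z^-k)/2, hence
  T_{n,A}(x) = z^(n-m) (P_A(z) + z^-(2n-m) Q(z)) / 2 with Q(z) = sum_i a_i z^i. Near a root \<omega>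
  of P_A with |\<omega>| > 1 the term z^-(2n-m) Q(z) is uniformly small once n is large, so by a
  topological form of Rouche's theorem P_A + z^-(2n-m) Q still vanishes at some z close to \<omega>,
  and (z + 1/z)/2 is the required root of T_{n,A}. Rouche's theorem holds because a zero-free
  perturbation would give a continuous logarithm of (z - \<omega>)^k on a circle around \<omega>, which is
  impossible as the circle is not contractible.\<close>

abbreviation cpoly :: "real poly \<Rightarrow> complex poly" where
  "cpoly \<equiv> map_poly complex_of_real"

lemma cpoly_add: "cpoly (p + q) = cpoly p + cpoly q"
  by (rule poly_eqI) (simp add: coeff_map_poly)

lemma cpoly_diff: "cpoly (p - q) = cpoly p - cpoly q"
  by (rule poly_eqI) (simp add: coeff_map_poly)

lemma cpoly_mult: "cpoly (p * q) = cpoly p * cpoly q"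
  by (rule poly_eqI) (simp add: coeff_map_poly coeff_mult)

lemma cpoly_smult: "cpoly (smult c p) = smult (of_real c) (cpoly p)"
  by (rule poly_eqI) (simp add: coeff_map_poly)

lemma cpoly_sum: "cpoly (\<Sum>i\<in>I. f i) = (\<Sum>i\<in>I. cpoly (f i))"
  by (induction I rule: infinite_finite_induct) (simp_all add: cpoly_add)

lemma poly_cheb_T_Joukowski:
  fixes z :: complex
  assumes "z \<noteq> 0"
  shows "poly (cpoly (cheb_T k)) ((z + inverse z) / 2) = (z ^ k + inverse z ^ k) / 2"
proof (induction k rule: cheb_T.induct)
  case (3 k)
  let ?x = "(z + inverse z) / 2"
  have "poly (cpoly (cheb_T (Suc (Suc k)))) ?x =
      (z + inverse z) * poly (cpoly (cheb_T (Suc k))) ?x - poly (cpoly (cheb_T k)) ?x"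
    by (simp only: cheb_T.simps cpoly_diff cpoly_mult) (simp add: map_poly_pCons)
  also have "\<dots> = (z + inverse z) * ((z ^ Suc k + inverse z ^ Suc k) / 2) - (z ^ k + inverse z ^ k) / 2"
    by (simp only: 3)
  also have "\<dots> = (z ^ Suc (Suc k) + inverse z ^ Suc (Suc k)) / 2"
    using assms by (simp add: field_simps)
  finally show ?case .
qed (simp_all add: map_poly_pCons)

lemma Joukowski_power_split:
  fixes z :: complex
  assumes "z \<noteq> 0" "i \<le> m" "m \<le> n"
  shows "(z ^ (n - i) + inverse z ^ (n - i)) / 2 = z ^ (n - m) * (z ^ (m - i) + z ^ i / z ^ (2 * n - m)) / 2"
proof -
  obtain d j where "n = m + d" "m = i + j"
    using assms(2,3) le_Suc_ex by metis
  then show ?thesis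
    using assms(1) by (simp add: power_add power_mult power2_eq_square field_simps)
qed

lemma poly_P_A: "poly (cpoly (P_A m a)) z = (\<Sum>i\<le>m. of_real (a i) * z ^ (m - i))"
  by (simp add: P_A_def cpoly_sum map_poly_monom poly_sum poly_monom)

lemma P_A_nonzero:
  assumes "a 0 \<noteq> 0"
  shows "P_A m a \<noteq> 0"
proof -
  have "coeff (P_A m a) m = (\<Sum>i\<in>{0}. a i)"
    unfolding P_A_def coeff_sum coeff_monom
    by (rule sum.mono_neutral_cong_right) auto
  with assms show ?thesis
    by auto
qed

lemma poly_T_nA_Joukowski:
  fixes z :: complex
  assumes "z \<noteq> 0" "m \<le> n"
  shows "poly (cpoly (T_nA n m a)) ((z + inverse z) / 2) =
    z ^ (n - m) * (poly (cpoly (P_A m a)) z + (\<Sum>i\<le>m. of_real (a i) * z ^ i) / z ^ (2 * n - m)) / 2"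
proof -
  have "poly (cpoly (T_nA n m a)) ((z + inverse z) / 2) =
      (\<Sum>i\<le>m. of_real (a i) * ((z ^ (n - i) + inverse z ^ (n - i)) / 2))"
    by (simp add: T_nA_def cpoly_sum cpoly_smult poly_sum poly_cheb_T_Joukowski[OF assms(1)])
  also have "\<dots> = (\<Sum>i\<le>m. of_real (a i) * (z ^ (n - m) * (z ^ (m - i) + z ^ i / z ^ (2 * n - m)) / 2))"
    using assms by (intro sum.cong) (simp_all add: Joukowski_power_split)
  also have "\<dots> = z ^ (n - m) * (poly (cpoly (P_A m a)) z + (\<Sum>i\<le>m. of_real (a i) * z ^ i) / z ^ (2 * n - m)) / 2"
    unfolding poly_P_A sum_divide_distrib sum.distrib[symmetric] sum_distrib_left
    by (intro sum.cong) (simp_all add: algebra_simps)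
  finally show ?thesis .
qed

lemma no_continuous_log_sphere:
  fixes c :: complex
  assumes "r > 0"
  shows "\<nexists>g. continuous_on (sphere c r) g \<and> (\<forall>z\<in>sphere c r. z - c = exp (g z))"
proof
  assume "\<exists>g. continuous_on (sphere c r) g \<and> (\<forall>z\<in>sphere c r. z - c = exp (g z))"
  then obtain a where a: "homotopic_with_canon (\<lambda>h. True) (sphere c r) (- {0}) (\<lambda>z. z - c) (\<lambda>z. a)"
    using inessential_eq_continuous_logarithm[of "sphere c r" "\<lambda>z. z - c"] by blast
  \<comment> \<open>radial retraction of the punctured plane onto the circle; it turns a null-homotopy of
    z - c into a contraction of the circle\<close>
  define \<rho> where "\<rho> w = c + (r / norm w) *\<^sub>R w" for w :: complex
  have "homotopic_with_canon (\<lambda>h. True) (sphere c r) (sphere c r) (\<rho> \<circ> (\<lambda>z. z - c)) (\<rho> \<circ> (\<lambda>z. a))"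
    by (rule homotopic_with_compose_continuous_left[OF a])
       (use assms in \<open>auto simp: \<rho>_def dist_norm intro!: continuous_intros\<close>)
  then have "homotopic_with_canon (\<lambda>h. True) (sphere c r) (sphere c r) id (\<lambda>z. \<rho> a)"
    by (rule homotopic_with_eq) (use assms in \<open>auto simp: \<rho>_def dist_norm norm_minus_commute\<close>)
  then have "contractible (sphere c r)"
    unfolding contractible_def by blast
  with assms show False
    by (simp add: contractible_sphere)
qed

lemma no_continuous_log_power_sphere:
  fixes c :: complex
  assumes "r > 0" "k > 0"
  shows "\<nexists>g. continuous_on (sphere c r) g \<and> (\<forall>z\<in>sphere c r. (z - c) ^ k = exp (g z))"
proof
  assume "\<exists>g. continuous_on (sphere c r) g \<and> (\<forall>z\<in>sphere c r. (z - c) ^ k = exp (g z))"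
  then obtain g where cont_g: "continuous_on (sphere c r) g"
    and g: "\<And>z. z \<in> sphere c r \<Longrightarrow> (z - c) ^ k = exp (g z)"
    by blast
  define u where "u z = (z - c) / exp (g z / of_nat k)" for z
  have u_root: "u z ^ k = 1" if "z \<in> sphere c r" for z
  proof -
    have "exp (g z / of_nat k) ^ k = exp (g z)"
      using assms(2) by (simp flip: exp_of_nat_mult)
    then show ?thesis
      by (simp add: u_def power_divide g[OF that])
  qed
  have "u constant_on sphere c r"
  proof (rule continuous_finite_range_constant)
    show "connected (sphere c r)"
      by (simp add: connected_sphere DIM_complex)
    show "continuous_on (sphere c r) u"
      unfolding u_def using assms(2) by (intro continuous_intros cont_g) auto
    show "finite (u ` sphere c r)"
      by (rule finite_subset[of _ "{w. w ^ k = 1}"]) (use u_root assms(2) in auto)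
  qed
  then obtain w where w: "\<And>z. z \<in> sphere c r \<Longrightarrow> u z = w"
    by (auto simp: constant_on_def)
  have "w \<noteq> 0"
    using w[of "c + of_real r"] u_root[of "c + of_real r"] assms by (auto simp: dist_norm power_0_left)
  have "z - c = exp (Ln w + g z / of_nat k)" if "z \<in> sphere c r" for z
    using w[OF that] \<open>w \<noteq> 0\<close> by (simp add: u_def exp_add field_simps)
  moreover have "continuous_on (sphere c r) (\<lambda>z. Ln w + g z / of_nat k)"
    using assms(2) by (intro continuous_intros cont_g) auto
  ultimately show False
    using no_continuous_log_sphere[OF assms(1)] by blast
qed

lemma dominated_sum_eq_mult_exp:
  fixes f g :: "'a::topological_space \<Rightarrow> complex"
  assumes cont_f: "continuous_on S f" and cont_g: "continuous_on S g"
    and dominated: "\<And>z. z \<in> S \<Longrightarrow> norm (g z) < norm (f z)"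
  obtains h where "continuous_on S h" "\<And>z. z \<in> S \<Longrightarrow> f z + g z = f z * exp (h z)"
proof
  have f_nonzero: "f z \<noteq> 0" if "z \<in> S" for z
    using dominated[OF that] by auto
  have right_half_plane: "Re (1 + g z / f z) > 0" if "z \<in> S" for z
  proof -
    have "norm (g z / f z) < 1"
      using dominated[OF that] f_nonzero[OF that] by (simp add: norm_divide divide_less_eq)
    then show ?thesis
      using abs_Re_le_cmod[of "g z / f z"] by simp
  qed
  then have not_nonpos: "1 + g z / f z \<notin> \<real>\<^sub>\<le>\<^sub>0" if "z \<in> S" for z
    using that by (metis Re_complex_of_real nonpos_Reals_cases not_le)
  show "continuous_on S (\<lambda>z. Ln (1 + g z / f z))"
    using f_nonzero not_nonpos by (intro continuous_intros cont_f cont_g) auto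
  show "f z + g z = f z * exp (Ln (1 + g z / f z))" if "z \<in> S" for z
  proof -
    have "1 + g z / f z \<noteq> 0"
      using right_half_plane[OF that] by (metis less_irrefl zero_complex.sel(1))
    then show ?thesis
      using f_nonzero[OF that] by (simp add: field_simps)
  qed
qed

lemma Rouche_exists_zero_cball:
  fixes c :: complex
  assumes "r > 0" "k > 0"
    and cont_R: "continuous_on (cball c r) R" and R_nonzero: "\<And>z. z \<in> cball c r \<Longrightarrow> R z \<noteq> 0"
    and cont_g: "continuous_on (cball c r) g"
    and dominated: "\<And>z. z \<in> sphere c r \<Longrightarrow> norm (g z) < norm ((z - c) ^ k * R z)"
  shows "\<exists>z\<in>cball c r. (z - c) ^ k * R z + g z = 0"
proof (rule ccontr)
  assume "\<not> ?thesis"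
  then have F_nonzero: "(z - c) ^ k * R z + g z \<noteq> 0" if "z \<in> cball c r" for z
    using that by blast
  have "continuous_on (cball c r) (\<lambda>z. (z - c) ^ k * R z + g z)"
    by (intro continuous_intros cont_R cont_g)
  then obtain L where cont_L: "continuous_on (cball c r) L"
    and L: "\<And>z. z \<in> cball c r \<Longrightarrow> (z - c) ^ k * R z + g z = exp (L z)"
    using continuous_logarithm_on_cball[of c r "\<lambda>z. (z - c) ^ k * R z + g z"] F_nonzero by blast
  obtain LR where cont_LR: "continuous_on (cball c r) LR"
    and LR: "\<And>z. z \<in> cball c r \<Longrightarrow> R z = exp (LR z)"
    using continuous_logarithm_on_cball[OF cont_R R_nonzero] by metis
  have sphere_sub: "sphere c r \<subseteq> cball c r"
    by (rule sphere_cball)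
  have "continuous_on (sphere c r) (\<lambda>z. (z - c) ^ k * R z)"
    by (intro continuous_intros continuous_on_subset[OF cont_R sphere_sub])
  then obtain h where cont_h: "continuous_on (sphere c r) h"
    and h: "\<And>z. z \<in> sphere c r \<Longrightarrow> (z - c) ^ k * R z + g z = (z - c) ^ k * R z * exp (h z)"
    using dominated_sum_eq_mult_exp[OF _ continuous_on_subset[OF cont_g sphere_sub] dominated]
    by blast
  have "continuous_on (sphere c r) (\<lambda>z. L z - LR z - h z)"
    by (intro continuous_intros cont_h continuous_on_subset[OF cont_L sphere_sub]
        continuous_on_subset[OF cont_LR sphere_sub])
  moreover have "(z - c) ^ k = exp (L z - LR z - h z)" if "z \<in> sphere c r" for z
    using h[OF that] L[of z] LR[of z] that sphere_sub by (auto simp: exp_diff)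
  ultimately show False
    using no_continuous_log_power_sphere[OF assms(1,2)] by blast
qed

lemma eventually_norm_divide_power_less:
  fixes Q :: "'a::real_normed_field \<Rightarrow> 'a"
  assumes "compact K" "continuous_on K Q" "\<rho> > 1" "\<And>z. z \<in> K \<Longrightarrow> \<rho> \<le> norm z" "e > 0"
  shows "\<forall>\<^sub>F M in sequentially. \<forall>z\<in>K. norm (Q z / z ^ M) < e"
proof -
  obtain B where "B > 0" and B: "\<And>z. z \<in> K \<Longrightarrow> norm (Q z) \<le> B"
    using compact_imp_bounded[OF compact_continuous_image[OF assms(2,1)]]
    unfolding bounded_pos by blast
  obtain N where N: "B / e < \<rho> ^ N"
    using real_arch_pow[OF assms(3)] by blast
  show ?thesis
  proof (rule eventually_sequentiallyI, rule ballI)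
    fix M z assume "N \<le> M" "z \<in> K"
    have "norm (Q z / z ^ M) \<le> B / \<rho> ^ M"
      unfolding norm_divide norm_power
      using B[OF \<open>z \<in> K\<close>] assms(3) assms(4)[OF \<open>z \<in> K\<close>] \<open>B > 0\<close>
      by (intro frac_le power_mono) auto
    also have "\<dots> \<le> B / \<rho> ^ N"
      using assms(3) \<open>N \<le> M\<close> \<open>B > 0\<close> by (intro divide_left_mono power_increasing) auto
    also have "\<dots> < e"
      using N assms(3,5) by (simp add: divide_less_eq mult.commute)
    finally show "norm (Q z / z ^ M) < e" .
  qed
qed

lemma poly_root_persists_under_decaying_perturbation:
  fixes p :: "complex poly" and Q :: "complex \<Rightarrow> complex"
  assumes "p \<noteq> 0" "poly p \<omega> = 0" "norm \<omega> > 1" "continuous_on UNIV Q" "\<delta> > 0"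
  shows "\<forall>\<^sub>F M in sequentially. \<exists>z. dist z \<omega> < \<delta> \<and> poly p z + Q z / z ^ M = 0"
proof -
  define k where "k = order \<omega> p"
  have "k > 0"
    using assms(1,2) order_root by (auto simp: k_def)
  obtain q where p_eq: "p = [:-\<omega>, 1:] ^ k * q" and "\<not> [:-\<omega>, 1:] dvd q"
    using order_decomp[OF assms(1)] k_def by blast
  then have "poly q \<omega> \<noteq> 0"
    using poly_eq_0_iff_dvd by blast
  then obtain d where "d > 0" and q_nonzero_near: "\<And>y. dist \<omega> y < d \<Longrightarrow> poly q y \<noteq> 0"
    using continuous_at_avoid[of \<omega> "poly q" 0] poly_isCont by blast
  define r where "r = min (min d \<delta>) (norm \<omega> - 1) / 2"
  have r: "0 < r" "r < d" "r < \<delta>" "r < norm \<omega> - 1"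
    using \<open>d > 0\<close> assms(3,5) by (auto simp: r_def)
  have norm_ge: "norm \<omega> - r \<le> norm z" if "z \<in> cball \<omega> r" for z
    using that norm_triangle_ineq2[of \<omega> z] by (auto simp: dist_norm norm_minus_commute)
  then have nonzero: "z \<noteq> 0" if "z \<in> cball \<omega> r" for z
    using that r(4) by force
  have q_nonzero: "poly q z \<noteq> 0" if "z \<in> cball \<omega> r" for z
    using that r q_nonzero_near by auto
  have "\<exists>z0\<in>cball \<omega> r. \<forall>z\<in>cball \<omega> r. norm (poly q z0) \<le> norm (poly q z)"
    using r(1) by (intro continuous_attains_inf continuous_intros) auto
  then obtain z0 where "z0 \<in> cball \<omega> r" and z0: "\<And>z. z \<in> cball \<omega> r \<Longrightarrow> norm (poly q z0) \<le> norm (poly q z)"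
    by blast
  have "norm (poly q z0) > 0"
    using q_nonzero[OF \<open>z0 \<in> cball \<omega> r\<close>] by simp
  then have "\<forall>\<^sub>F M in sequentially. \<forall>z\<in>cball \<omega> r. norm (Q z / z ^ M) < r ^ k * norm (poly q z0)"
    using r norm_ge
    by (intro eventually_norm_divide_power_less continuous_on_subset[OF assms(4)]) auto
  then show ?thesis
  proof (rule eventually_mono)
    fix M assume small: "\<forall>z\<in>cball \<omega> r. norm (Q z / z ^ M) < r ^ k * norm (poly q z0)"
    have "norm (Q z / z ^ M) < norm ((z - \<omega>) ^ k * poly q z)" if "z \<in> sphere \<omega> r" for z
    proof -
      have z: "z \<in> cball \<omega> r"
        using that by auto
      have "r ^ k * norm (poly q z0) \<le> norm ((z - \<omega>) ^ k * poly q z)"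
        using that z0[OF z] r(1)
        by (simp add: norm_mult norm_power dist_norm norm_minus_commute mult_left_mono)
      then show ?thesis
        using small z by fastforce
    qed
    moreover have "continuous_on (cball \<omega> r) (poly q)"
      by (intro continuous_intros)
    moreover have "continuous_on (cball \<omega> r) (\<lambda>z. Q z / z ^ M)"
      using nonzero by (intro continuous_intros continuous_on_subset[OF assms(4)]) auto
    ultimately obtain z where "z \<in> cball \<omega> r" "(z - \<omega>) ^ k * poly q z + Q z / z ^ M = 0"
      using Rouche_exists_zero_cball[OF r(1) \<open>k > 0\<close>, where c = \<omega> and R = "poly q"] q_nonzero
      by blast
    then show "\<exists>z. dist z \<omega> < \<delta> \<and> poly p z + Q z / z ^ M = 0"
      using r(3) by (intro exI[of _ z]) (auto simp: p_eq poly_power dist_commute)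
  qed
qed

lemma eventually_T_nA_root_near_Joukowski:
  assumes "a 0 \<noteq> 0" "poly (cpoly (P_A m a)) \<omega> = 0" "norm \<omega> > 1" "\<delta> > 0"
  shows "\<forall>\<^sub>F n in sequentially. \<exists>z. dist z \<omega> < \<delta> \<and> poly (cpoly (T_nA n m a)) ((z + inverse z) / 2) = 0"
proof -
  define Q where "Q z = (\<Sum>i\<le>m. of_real (a i) * z ^ i)" for z :: complex
  have "cpoly (P_A m a) \<noteq> 0"
    using P_A_nonzero[of a m] assms(1) by (simp add: map_poly_eq_0_iff)
  moreover have "continuous_on UNIV Q"
    unfolding Q_def by (intro continuous_intros)
  ultimately have "\<forall>\<^sub>F M in sequentially.
      \<exists>z. dist z \<omega> < min \<delta> (norm \<omega>) \<and> poly (cpoly (P_A m a)) z + Q z / z ^ M = 0"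
    using assms(2-4) by (intro poly_root_persists_under_decaying_perturbation) auto
  then obtain N where N: "\<And>M. N \<le> M \<Longrightarrow>
      \<exists>z. dist z \<omega> < min \<delta> (norm \<omega>) \<and> poly (cpoly (P_A m a)) z + Q z / z ^ M = 0"
    by (auto simp: eventually_sequentially)
  show ?thesis
  proof (rule eventually_sequentiallyI)
    fix n assume "N + m \<le> n"
    then have "N \<le> 2 * n - m"
      by linarith
    then obtain z where z: "dist z \<omega> < min \<delta> (norm \<omega>)"
      and root: "poly (cpoly (P_A m a)) z + Q z / z ^ (2 * n - m) = 0"
      using N by blast
    have "z \<noteq> 0"
      using z by auto
    then have "poly (cpoly (T_nA n m a)) ((z + inverse z) / 2) = 0"
      using poly_T_nA_Joukowski[of z m n a] root \<open>N + m \<le> n\<close> by (simp add: Q_def)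
    with z show "\<exists>z. dist z \<omega> < \<delta> \<and> poly (cpoly (T_nA n m a)) ((z + inverse z) / 2) = 0"
      by auto
  qed
qed

theorem theorem2p4:
  fixes m :: nat and a :: "nat \<Rightarrow> real" and \<omega> :: complex
  assumes "m \<ge> 1" and "a 0 \<noteq> 0" and "a m \<noteq> 0"
    and "poly (map_poly complex_of_real (P_A m a)) \<omega> = 0"
    and "norm \<omega> > 1"
  shows "\<forall>\<epsilon>>0. \<exists>n0::nat. \<forall>n>n0. n \<ge> m \<longrightarrow>
           (\<exists>\<xi>::complex. poly (map_poly complex_of_real (T_nA n m a)) \<xi> = 0 \<and>
                  norm (\<xi> - (\<omega> + inverse \<omega>) / 2) < \<epsilon>)"
proof (intro allI impI)
  fix \<epsilon> :: real assume "\<epsilon> > 0"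
  have "continuous (at \<omega>) (\<lambda>z. (z + inverse z) / 2)"
    using assms(5) by (intro continuous_intros) auto
  then obtain \<delta> where "\<delta> > 0"
    and \<delta>: "\<And>z. dist z \<omega> < \<delta> \<Longrightarrow> dist ((z + inverse z) / 2) ((\<omega> + inverse \<omega>) / 2) < \<epsilon>"
    using \<open>\<epsilon> > 0\<close> unfolding continuous_at_eps_delta by blast
  obtain n0 where "\<And>n. n0 \<le> n \<Longrightarrow>
      \<exists>z. dist z \<omega> < \<delta> \<and> poly (cpoly (T_nA n m a)) ((z + inverse z) / 2) = 0"
    using eventually_T_nA_root_near_Joukowski[OF assms(2,4,5) \<open>\<delta> > 0\<close>]
    unfolding eventually_sequentially by blast
  then show "\<exists>n0. \<forall>n>n0. n \<ge> m \<longrightarrow>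
      (\<exists>\<xi>. poly (cpoly (T_nA n m a)) \<xi> = 0 \<and> norm (\<xi> - (\<omega> + inverse \<omega>) / 2) < \<epsilon>)"
    using \<delta> by (metis dist_norm less_imp_le)
qed

end
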